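(* Assume the setting, algorithm $\mathrm{ALG}$ and linear program described in the context. For every $\varepsilon>0$ and every integer horizon $H\ge \max_{p\in\Pi} r_p$, $$\mathrm{ALG}\;\le\; 2\Big(\frac{2}{\varepsilon}+1\Big)\cdot \mathrm{val}(\mathcal P_{\varepsilon,H}).$$ That is, $\mathrm{ALG}$ running at unit speed is $2(2/\varepsilon+1)$-competitive against the (LP relaxation of the) optimal offline preemptive, migratory solution whose reconfigurable transmissions run at speed $1/(2+\varepsilon)$ (equivalently, $\mathrm{ALG}$ has speedup $2+\varepsilon$).
   Context: Network. $S,T,R,D$ are pairwise disjoint finite sets (sources, transmitters, receivers, destinations). Each transmitter $t\in T$ is attached to a source $s(t)\in S$ via a link of integer delay $d(s(t),t)\ge 0$; each receiver $r\in R$ is attached to a destination $d(r)\in D$ via a link of integer delay $d(r,d(r))\ge 0$. A set $E_R\subseteq T\times R$ of reconfigurable edges is given, each $e\in E_R$ with integer delay $d(e)\ge 1$ (sending an amount $s$ through $e$ takes time $s\cdot d(e)$). A set $E_\ell\subseteq S\times D$ of fixed links is given, each with integer delay $d(\cdot,\cdot)\ge0$. For $e=(t,r)\in E_R$ put $\Delta(e)=d(s(t),t)+d(e)+d(r,d(r))$. Two edges of $E_R$ are adjacent if they share a transmitter or a receiver (an edge is adjacent to itself). Packets. $\Pi$ is a finite set of unit-size packets; packet $p$ has weight $w_p>0$, release time $r_p\in\mathbb Z_{\ge1}$, source $s_p\in S$, destination $d_p\in D$. Let $E(p)=\{(t,r)\in E_R: s(t)=s_p,\ d(r)=d_p\}$;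 assume $E(p)\neq\emptyset$ for all $p$. $\Pi_\ell$ is the set of packets with $(s_p,d_p)\in E_\ell$, and for such $p$, $\ell_p:=d(s_p,d_p)$. Fix a total order $\prec$ on $\Pi$ with $r_p<r_q\Rightarrow p\prec q$ ("$p$ arrived before $q$"). Algorithm ALG. Packets are processed one by one in the order $\prec$; packet $p$ is processed at time $r_p$, before the transmission step $r_p$. A packet assigned to a reconfigurable edge $e$ is split into $d(e)$ chunks, each of size $1/d(e)$ and weight $w_p/d(e)$, all assigned to $e$; for a chunk $c$, $p(c)$ is its packet, $w_c$ its weight, $e(c)$ its edge. A chunk is pending until it is transmitted. For a set $C$ of chunks, $W(C)$ is its total weight. When $p$ is processed, let $B(p)$ be the set of pending chunks of packets $p'\prec p$. For $e=(t,r)\in E(p)$ let $\mathrm{Adj}(p,e)$ be the chunks of $B(p)$ whose edge is adjacent to $e$, $H(p,e)=\{c\in \mathrm{Adj}(p,e): w_c\ge w_p/d(e)\}$, $L(p,e)=\mathrm{Adj}(p,e)\setminus H(p,e)$, and $$\mathrm{imp}(p,e)=w_p\Big(d(s_p,t)+\tfrac{d(e)+1}{2}+d(r,d_p)\Big)+w_p\,|H(p,e)|+d(e)\,W(L(p,e)).$$ Let $e^*\in\arg\min_{e\in E(p)}\mathrm{imp}(p,e)$. If $p\in\Pi_\ell$ and $w_p\ell_p\le \mathrm{imp}(p,e^* )$, $p$ is sent over its fixed link (latency $w_p\ell_p$); otherwise $p$ is assigned to $e(p):=e^*$ and split into chunks. Scheduler: at each integer time $\tau\ge1$ (after processing the packets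 released at $\tau$), build $M_\tau$ greedily: start with $M_\tau=\emptyset$ and go through all pending chunks in order of decreasing weight, ties broken by $\prec$ on their packets (ties among chunks of the same packet arbitrary), adding a chunk $c$ to $M_\tau$ iff no chunk already in $M_\tau$ has an edge adjacent to $e(c)$. The chunks of $M_\tau$ are transmitted at step $\tau$ (and cease to be pending). If chunk $c$ of $p$ is transmitted at step $\tau_c$ via $e(p)=(t,r)$, its completion time is $f_c=\tau_c+1+d(s_p,t)+d(r,d_p)$, and $c$ is active at integer times $\tau$ with $r_p\le\tau<f_c$. The cost is $\mathrm{ALG}=\sum_{p\text{ sent on fixed link}}w_p\ell_p+\sum_{\text{chunks }c}w_c\,(f_c-r_{p(c)})$. Linear program. For $\varepsilon>0$ and integer $H\ge\max_p r_p$, $\mathcal P_{\varepsilon,H}$ has variables $x_{p,e,\tau}\ge0$ ($p\in\Pi$, $e\in E(p)$, $\tau\in\{r_p,\dots,H\}$) and $y_p\ge0$ ($p\in\Pi_\ell$): minimize $\sum_{p}\sum_{e\in E(p)}\sum_{\tau} w_p x_{p,e,\tau}(\tau+\Delta(e)-r_p)+\sum_{p\in\Pi_\ell}w_p\ell_p y_p$ subject to $\sum_{e,\tau}x_{p,e,\tau}+y_p\ge1$ for $p\in\Pi_\ell$; $\sum_{e,\tau}x_{p,e,\tau}\ge1$ for $p\notin\Pi_\ell$; for every $\tau$ and $t\in T$: $\sum_{r}\sum_{p: r_p\le\tau,(t,r)\in E(p)}d(t,r)\,x_{p,(t,r),\tau}\le\frac1{2+\varepsilon}$; for every $\tau$ and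 $r\in R$: $\sum_{t}\sum_{p:r_p\le\tau,(t,r)\in E(p)}d(t,r)\,x_{p,(t,r),\tau}\le\frac1{2+\varepsilon}$. $\mathrm{val}(\mathcal P_{\varepsilon,H})$ denotes its optimal value ($+\infty$ if infeasible). *)

theory Defs
  imports Complex_Main "HOL-Library.Extended_Real"
begin

text \<open>Sources, transmitters, receivers and destinations live in four distinct
  type variables, hence are automatically pairwise disjoint.\<close>

record ('s,'t,'r,'d) network =
  Src   :: "'s set"
  Trs   :: "'t set"
  Rcv   :: "'r set"
  Dst   :: "'d set"
  srcOf :: "'t \<Rightarrow> 's"
  dSrc  :: "'t \<Rightarrow> nat"         \<comment> \<open>d(s(t),t)\<close>
  dstOf :: "'r \<Rightarrow> 'd"
  dDst  :: "'r \<Rightarrow> nat"         \<comment> \<open>d(r,d(r))\<close>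
  ER    :: "('t \<times> 'r) set"
  dR    :: "'t \<times> 'r \<Rightarrow> nat"
  EL    :: "('s \<times> 'd) set"
  dL    :: "'s \<times> 'd \<Rightarrow> nat"

record ('p,'s,'d) packets =
  Pk  :: "'p set"
  wt  :: "'p \<Rightarrow> real"
  rl  :: "'p \<Rightarrow> nat"
  sP  :: "'p \<Rightarrow> 's"
  dP  :: "'p \<Rightarrow> 'd"

definition Ep :: "('s,'t,'r,'d) network \<Rightarrow> ('p,'s,'d) packets \<Rightarrow> 'p \<Rightarrow> ('t \<times> 'r) set" where
  "Ep N P p = {(t,r) \<in> ER N. srcOf N t = sP P p \<and> dstOf N r = dP P p}"

definition PiL :: "('s,'t,'r,'d) network \<Rightarrow> ('p,'s,'d) packets \<Rightarrow> 'p set" where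
  "PiL N P = {p \<in> Pk P. (sP P p, dP P p) \<in> EL N}"

definition ellp :: "('s,'t,'r,'d) network \<Rightarrow> ('p,'s,'d) packets \<Rightarrow> 'p \<Rightarrow> nat" where
  "ellp N P p = dL N (sP P p, dP P p)"

definition Delta :: "('s,'t,'r,'d) network \<Rightarrow> 't \<times> 'r \<Rightarrow> nat" where
  "Delta N e = dSrc N (fst e) + dR N e + dDst N (snd e)"

definition wf_instance :: "('s,'t,'r,'d) network \<Rightarrow> ('p,'s,'d) packets \<Rightarrow> bool" where
  "wf_instance N P \<longleftrightarrow>
     finite (Src N) \<and> finite (Trs N) \<and> finite (Rcv N) \<and> finite (Dst N) \<and>
     (\<forall>t\<in>Trs N. srcOf N t \<in> Src N) \<and> (\<forall>r\<in>Rcv N. dstOf N r \<in> Dst N) \<and>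
     ER N \<subseteq> Trs N \<times> Rcv N \<and> (\<forall>e\<in>ER N. dR N e \<ge> 1) \<and>
     EL N \<subseteq> Src N \<times> Dst N \<and>
     finite (Pk P) \<and>
     (\<forall>p\<in>Pk P. wt P p > 0 \<and> rl P p \<ge> 1 \<and> sP P p \<in> Src N \<and> dP P p \<in> Dst N
                \<and> Ep N P p \<noteq> {})"

definition adj :: "'t \<times> 'r \<Rightarrow> 't \<times> 'r \<Rightarrow> bool" where
  "adj e e' \<longleftrightarrow> fst e = fst e' \<or> snd e = snd e'"

section \<open>The algorithm ALG (as a characterisation of its executions)\<close>

text \<open>An execution is described by
  \<^item> asg p = None (p sent over fixed link) or asg p = Some e (p assigned to e);
  \<^item> the chunks of p assigned to e are the pairs (p,i) with i < d(e);
  \<^item> tx c is the step at which chunk c is transmitted.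
  The order \<prec> is the relation prec (pairs (p,q) with p \<prec> q).\<close>

definition chunks :: "('s,'t,'r,'d) network \<Rightarrow> ('p,'s,'d) packets \<Rightarrow> ('p \<Rightarrow> ('t \<times> 'r) option)
    \<Rightarrow> ('p \<times> nat) set" where
  "chunks N P asg = {(p,i). p \<in> Pk P \<and> (\<exists>e. asg p = Some e \<and> i < dR N e)}"

definition edgeOf :: "('p \<Rightarrow> ('t \<times> 'r) option) \<Rightarrow> 'p \<times> nat \<Rightarrow> 't \<times> 'r" where
  "edgeOf asg c = the (asg (fst c))"

definition cw :: "('s,'t,'r,'d) network \<Rightarrow> ('p,'s,'d) packets \<Rightarrow> ('p \<Rightarrow> ('t \<times> 'r) option)
    \<Rightarrow> 'p \<times> nat \<Rightarrow> real" where
  "cw N P asg c = wt P (fst c) / real (dR N (edgeOf asg c))"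

text \<open>B(p): pending chunks of earlier packets when p is processed (at time r_p, before
  transmission step r_p), i.e. those transmitted at a step \<ge> r_p.\<close>
definition Bset :: "('s,'t,'r,'d) network \<Rightarrow> ('p,'s,'d) packets \<Rightarrow> ('p \<times> 'p) set
    \<Rightarrow> ('p \<Rightarrow> ('t \<times> 'r) option) \<Rightarrow> ('p \<times> nat \<Rightarrow> nat) \<Rightarrow> 'p \<Rightarrow> ('p \<times> nat) set" where
  "Bset N P prec asg tx p = {c \<in> chunks N P asg. (fst c, p) \<in> prec \<and> rl P p \<le> tx c}"

definition imp :: "('s,'t,'r,'d) network \<Rightarrow> ('p,'s,'d) packets \<Rightarrow> ('p \<times> 'p) set
    \<Rightarrow> ('p \<Rightarrow> ('t \<times> 'r) option) \<Rightarrow> ('p \<times> nat \<Rightarrow> nat) \<Rightarrow> 'p \<Rightarrow> 't \<times> 'r \<Rightarrow> real" where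
  "imp N P prec asg tx p e =
     (let A  = {c \<in> Bset N P prec asg tx p. adj (edgeOf asg c) e};
          Hs = {c \<in> A. cw N P asg c \<ge> wt P p / real (dR N e)};
          Ls = A - Hs
      in wt P p * (real (dSrc N (fst e)) + (real (dR N e) + 1) / 2 + real (dDst N (snd e)))
         + wt P p * real (card Hs) + real (dR N e) * sum (cw N P asg) Ls)"

text \<open>Decision made when processing p (any argmin e* may be chosen).\<close>
definition proc_ok :: "('s,'t,'r,'d) network \<Rightarrow> ('p,'s,'d) packets \<Rightarrow> ('p \<times> 'p) set
    \<Rightarrow> ('p \<Rightarrow> ('t \<times> 'r) option) \<Rightarrow> ('p \<times> nat \<Rightarrow> nat) \<Rightarrow> 'p \<Rightarrow> bool" where
  "proc_ok N P prec asg tx p \<longleftrightarrow>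
     (\<exists>e\<in>Ep N P p. (\<forall>e'\<in>Ep N P p. imp N P prec asg tx p e \<le> imp N P prec asg tx p e') \<and>
        (if p \<in> PiL N P \<and> wt P p * real (ellp N P p) \<le> imp N P prec asg tx p e
         then asg p = None else asg p = Some e))"

definition pending :: "('s,'t,'r,'d) network \<Rightarrow> ('p,'s,'d) packets
    \<Rightarrow> ('p \<Rightarrow> ('t \<times> 'r) option) \<Rightarrow> ('p \<times> nat \<Rightarrow> nat) \<Rightarrow> nat \<Rightarrow> ('p \<times> nat) set" where
  "pending N P asg tx \<tau> = {c \<in> chunks N P asg. rl P (fst c) \<le> \<tau> \<and> \<tau> \<le> tx c}"

definition chunk_before :: "('s,'t,'r,'d) network \<Rightarrow> ('p,'s,'d) packets \<Rightarrow> ('p \<times> 'p) set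
    \<Rightarrow> ('p \<Rightarrow> ('t \<times> 'r) option) \<Rightarrow> 'p \<times> nat \<Rightarrow> 'p \<times> nat \<Rightarrow> bool" where
  "chunk_before N P prec asg c c' \<longleftrightarrow>
     cw N P asg c > cw N P asg c' \<or> (cw N P asg c = cw N P asg c' \<and> (fst c, fst c') \<in> prec)"

definition greedy :: "('c \<Rightarrow> 't \<times> 'r) \<Rightarrow> 'c list \<Rightarrow> 'c set" where
  "greedy ed L = foldl (\<lambda>M c. if (\<exists>c'\<in>M. adj (ed c') (ed c)) then M else insert c M) {} L"

definition sched_ok :: "('s,'t,'r,'d) network \<Rightarrow> ('p,'s,'d) packets \<Rightarrow> ('p \<times> 'p) set
    \<Rightarrow> ('p \<Rightarrow> ('t \<times> 'r) option) \<Rightarrow> ('p \<times> nat \<Rightarrow> nat) \<Rightarrow> nat \<Rightarrow> bool" where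
  "sched_ok N P prec asg tx \<tau> \<longleftrightarrow>
     (\<exists>L. distinct L \<and> set L = pending N P asg tx \<tau> \<and>
          sorted_wrt (\<lambda>a b. \<not> chunk_before N P prec asg b a) L \<and>
          {c \<in> chunks N P asg. tx c = \<tau>} = greedy (edgeOf asg) L)"

definition alg_run :: "('s,'t,'r,'d) network \<Rightarrow> ('p,'s,'d) packets \<Rightarrow> ('p \<times> 'p) set
    \<Rightarrow> ('p \<Rightarrow> ('t \<times> 'r) option) \<Rightarrow> ('p \<times> nat \<Rightarrow> nat) \<Rightarrow> bool" where
  "alg_run N P prec asg tx \<longleftrightarrow>
     (\<forall>p. p \<notin> Pk P \<longrightarrow> asg p = None) \<and>
     (\<forall>p\<in>Pk P. proc_ok N P prec asg tx p) \<and>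
     (\<forall>c\<in>chunks N P asg. rl P (fst c) \<le> tx c) \<and>
     (\<forall>\<tau>\<ge>1. sched_ok N P prec asg tx \<tau>)"

definition alg_cost :: "('s,'t,'r,'d) network \<Rightarrow> ('p,'s,'d) packets
    \<Rightarrow> ('p \<Rightarrow> ('t \<times> 'r) option) \<Rightarrow> ('p \<times> nat \<Rightarrow> nat) \<Rightarrow> real" where
  "alg_cost N P asg tx =
     (\<Sum>p\<in>{p \<in> Pk P. asg p = None}. wt P p * real (ellp N P p)) +
     (\<Sum>c\<in>chunks N P asg. cw N P asg c *
        (real (tx c + 1 + dSrc N (fst (edgeOf asg c)) + dDst N (snd (edgeOf asg c)))
         - real (rl P (fst c))))"

definition lp_feasible :: "('s,'t,'r,'d) network \<Rightarrow> ('p,'s,'d) packets \<Rightarrow> real \<Rightarrow> nat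
    \<Rightarrow> ('p \<Rightarrow> 't \<times> 'r \<Rightarrow> nat \<Rightarrow> real) \<Rightarrow> ('p \<Rightarrow> real) \<Rightarrow> bool" where
  "lp_feasible N P \<epsilon> H x y \<longleftrightarrow>
     (\<forall>p\<in>Pk P. \<forall>e\<in>Ep N P p. \<forall>\<tau>\<in>{rl P p..H}. x p e \<tau> \<ge> 0) \<and>
     (\<forall>p\<in>PiL N P. y p \<ge> 0) \<and>
     (\<forall>p\<in>PiL N P. (\<Sum>e\<in>Ep N P p. \<Sum>\<tau>\<in>{rl P p..H}. x p e \<tau>) + y p \<ge> 1) \<and>
     (\<forall>p\<in>Pk P - PiL N P. (\<Sum>e\<in>Ep N P p. \<Sum>\<tau>\<in>{rl P p..H}. x p e \<tau>) \<ge> 1) \<and>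
     (\<forall>\<tau>\<le>H. \<forall>t\<in>Trs N.
        (\<Sum>r\<in>Rcv N. \<Sum>p\<in>{p \<in> Pk P. rl P p \<le> \<tau> \<and> (t,r) \<in> Ep N P p}.
            real (dR N (t,r)) * x p (t,r) \<tau>) \<le> 1 / (2 + \<epsilon>)) \<and>
     (\<forall>\<tau>\<le>H. \<forall>r\<in>Rcv N.
        (\<Sum>t\<in>Trs N. \<Sum>p\<in>{p \<in> Pk P. rl P p \<le> \<tau> \<and> (t,r) \<in> Ep N P p}.
            real (dR N (t,r)) * x p (t,r) \<tau>) \<le> 1 / (2 + \<epsilon>))"

definition lp_obj :: "('s,'t,'r,'d) network \<Rightarrow> ('p,'s,'d) packets \<Rightarrow> nat
    \<Rightarrow> ('p \<Rightarrow> 't \<times> 'r \<Rightarrow> nat \<Rightarrow> real) \<Rightarrow> ('p \<Rightarrow> real) \<Rightarrow> real" where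
  "lp_obj N P H x y =
     (\<Sum>p\<in>Pk P. \<Sum>e\<in>Ep N P p. \<Sum>\<tau>\<in>{rl P p..H}.
        wt P p * x p e \<tau> * (real \<tau> + real (Delta N e) - real (rl P p))) +
     (\<Sum>p\<in>PiL N P. wt P p * real (ellp N P p) * y p)"

text \<open>Optimal value, +\<infinity> if infeasible.\<close>
definition lp_val :: "('s,'t,'r,'d) network \<Rightarrow> ('p,'s,'d) packets \<Rightarrow> real \<Rightarrow> nat \<Rightarrow> ereal" where
  "lp_val N P \<epsilon> H = (INF xy \<in> {(x,y). lp_feasible N P \<epsilon> H x y}. ereal (lp_obj N P H (fst xy) (snd xy)))"

end

theory Submission
  imports Defs
begin

text \<open>
  A chunk waits at step \<open>\<tau>\<close> only if a chunk ahead of it in the scheduler's order is sent over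
  an adjacent edge at \<open>\<tau>\<close>. Such a blocker belongs to the same packet (on average half of the
  other \<open>d(e) - 1\<close> chunks), to an earlier packet (it is then heavy and counted in \<open>|H(p,e)|\<close>),
  or to a later packet \<open>q\<close> (the blocked chunk is then light for \<open>q\<close> and paid for by the term
  \<open>d(e) W(L(q,e))\<close> of \<open>q\<close>). Hence ALG is at most the sum of the costs \<open>imp(p,e(p))\<close>
  resp. \<open>w\<^sub>p \<ell>\<^sub>p\<close> the algorithm commits to.

  Half of these costs, together with half the pending weight at each transmitter and receiver
  at each step, is a dual solution: since per step at most one chunk leaves a transmitter and at
  most one enters a receiver, \<open>imp(p,e) \<le> w\<^sub>p \<Delta>(e) + 2 w\<^sub>p (\<tau> - r\<^sub>p) + d(e) (B\<^sub>t(\<tau>) + B\<^sub>r(\<tau>))\<close>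
  for \<open>\<tau> \<ge> r\<^sub>p\<close>, where \<open>B\<close> is pending weight. The pending weights sum to at most ALG, so
  against the capacities \<open>1/(2+\<epsilon>)\<close> weak duality gives \<open>ALG/2 - ALG/(2+\<epsilon>) \<le> LP\<close>.
\<close>

section \<open>Greedy matchings\<close>

lemma greedy_Nil [simp]: "greedy ed [] = {}"
  by (simp add: greedy_def)

lemma greedy_snoc:
  "greedy ed (xs @ [x]) =
     (if \<exists>c\<in>greedy ed xs. adj (ed c) (ed x) then greedy ed xs else insert x (greedy ed xs))"
  by (simp add: greedy_def)

lemma greedy_subset: "greedy ed xs \<subseteq> set xs"
  by (induction xs rule: rev_induct) (auto simp: greedy_snoc)

lemma adj_sym: "adj a b \<longleftrightarrow> adj b a"
  by (auto simp: adj_def)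

lemma greedy_nonadj:
  "a \<in> greedy ed xs \<Longrightarrow> b \<in> greedy ed xs \<Longrightarrow> a \<noteq> b \<Longrightarrow> \<not> adj (ed a) (ed b)"
  by (induction xs arbitrary: a b rule: rev_induct) (auto simp: greedy_snoc adj_sym split: if_splits)

lemma greedy_blocked:
  assumes "x \<in> set xs" "x \<notin> greedy ed xs"
  shows "\<exists>i j. i < j \<and> j < length xs \<and> xs ! j = x \<and> xs ! i \<in> greedy ed xs \<and> adj (ed (xs ! i)) (ed x)"
  using assms
proof (induction xs rule: rev_induct)
  case Nil
  then show ?case by simp
next
  case (snoc a xs)
  show ?case
  proof (cases "x \<in> set xs \<and> x \<notin> greedy ed xs")
    case True
    then obtain i j where "i < j" "j < length xs" "xs ! j = x" "xs ! i \<in> greedy ed xs"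
        "adj (ed (xs ! i)) (ed x)"
      using snoc.IH by blast
    then show ?thesis
      by (intro exI[of _ i] exI[of _ j]) (auto simp: nth_append greedy_snoc)
  next
    case False
    with snoc.prems have "x = a" "\<exists>c\<in>greedy ed xs. adj (ed c) (ed a)"
      by (auto simp: greedy_snoc split: if_splits)
    then obtain i where "i < length xs" "xs ! i \<in> greedy ed xs" "adj (ed (xs ! i)) (ed x)"
      using greedy_subset by (metis in_set_conv_nth subsetD)
    then show ?thesis using \<open>x = a\<close>
      by (intro exI[of _ i] exI[of _ "length xs"]) (auto simp: nth_append greedy_snoc)
  qed
qed

lemma sum_card_less_inj:
  fixes f :: "'a \<Rightarrow> 'b::linorder"
  assumes "finite S" "inj_on f S"
  shows "2 * (\<Sum>x\<in>S. card {y\<in>S. f y < f x}) = card S * card S - card S"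
proof -
  define Below where "Below = Sigma S (\<lambda>x. {y\<in>S. f y < f x})"
  define Above where "Above = Sigma S (\<lambda>x. {y\<in>S. f x < f y})"
  have card_Below: "card Below = (\<Sum>x\<in>S. card {y\<in>S. f y < f x})"
    unfolding Below_def using assms(1) by (subst card_SigmaI) auto
  have "Above = prod.swap ` Below" "inj_on prod.swap Below"
    unfolding Below_def Above_def by auto
  then have card_Above: "card Above = card Below"
    by (simp add: card_image)
  have "Below \<union> Above = S \<times> S - (\<lambda>x. (x, x)) ` S"
  proof
    show "S \<times> S - (\<lambda>x. (x, x)) ` S \<subseteq> Below \<union> Above"
      unfolding Below_def Above_def using inj_onD[OF assms(2)] by (force simp: neq_iff)
  qed (auto simp: Below_def Above_def)
  moreover have "card (S \<times> S - (\<lambda>x. (x, x)) ` S) = card S * card S - card S"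
    using assms(1) by (subst card_Diff_subset) (auto simp: card_image inj_on_def card_cartesian_product)
  moreover have "finite Below" "finite Above" "Below \<inter> Above = {}"
    unfolding Below_def Above_def using assms(1) by auto
  ultimately show ?thesis
    using card_Below card_Above card_Un_disjoint by (metis mult_2)
qed

lemma sum_regroup_by_time:
  fixes F :: "'p \<Rightarrow> 't \<times> 'r \<Rightarrow> nat \<Rightarrow> 'a::comm_monoid_add"
  assumes "finite K" "finite T" "finite R" "\<forall>p\<in>K. E p \<subseteq> T \<times> R"
  shows "(\<Sum>p\<in>K. \<Sum>e\<in>E p. \<Sum>\<tau>\<in>{a p..H}. F p e \<tau>)
       = (\<Sum>\<tau>\<le>H. \<Sum>t\<in>T. \<Sum>r\<in>R. \<Sum>p\<in>{p\<in>K. a p \<le> \<tau> \<and> (t, r) \<in> E p}. F p (t, r) \<tau>)"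
proof -
  have E: "E p = {e \<in> T \<times> R. e \<in> E p}" if "p \<in> K" for p
    using assms(4) that by auto
  have I: "{a p..H} = {\<tau>\<in>{..H}. a p \<le> \<tau>}" for p
    by auto
  have "(\<Sum>p\<in>K. \<Sum>e\<in>E p. \<Sum>\<tau>\<in>{a p..H}. F p e \<tau>)
      = (\<Sum>p\<in>K. \<Sum>e\<in>{e \<in> T \<times> R. e \<in> E p}. \<Sum>\<tau>\<in>{\<tau>\<in>{..H}. a p \<le> \<tau>}. F p e \<tau>)"
    using E I by (intro sum.cong) auto
  also have "\<dots> = (\<Sum>e\<in>T \<times> R. \<Sum>p\<in>{p\<in>K. e \<in> E p}. \<Sum>\<tau>\<in>{\<tau>\<in>{..H}. a p \<le> \<tau>}. F p e \<tau>)"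
    using assms(1-3) by (rule sum.swap_restrict[OF _ finite_cartesian_product])
  also have "\<dots> = (\<Sum>e\<in>T \<times> R. \<Sum>\<tau>\<le>H. \<Sum>p\<in>{p\<in>{p\<in>K. e \<in> E p}. a p \<le> \<tau>}. F p e \<tau>)"
    using assms(1) by (intro sum.cong refl sum.swap_restrict) auto
  also have "\<dots> = (\<Sum>\<tau>\<le>H. \<Sum>e\<in>T \<times> R. \<Sum>p\<in>{p\<in>K. a p \<le> \<tau> \<and> e \<in> E p}. F p e \<tau>)"
    by (subst sum.swap) (intro sum.cong refl arg_cong2[where f=sum]; auto)
  also have "\<dots> = (\<Sum>\<tau>\<le>H. \<Sum>t\<in>T. \<Sum>r\<in>R. \<Sum>p\<in>{p\<in>K. a p \<le> \<tau> \<and> (t, r) \<in> E p}. F p (t, r) \<tau>)"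
    by (simp add: sum.cartesian_product)
  finally show ?thesis .
qed

section \<open>Executions of the algorithm\<close>

locale alg_execution =
  fixes N :: "('s,'t,'r,'d) network" and P :: "('p,'s,'d) packets"
    and prec :: "('p \<times> 'p) set"
    and asg :: "'p \<Rightarrow> ('t \<times> 'r) option" and tx :: "'p \<times> nat \<Rightarrow> nat"
  assumes wf: "wf_instance N P"
    and prec_order: "strict_linear_order_on (Pk P) prec"
    and prec_release: "\<forall>p\<in>Pk P. \<forall>q\<in>Pk P. rl P p < rl P q \<longrightarrow> (p, q) \<in> prec"
    and run: "alg_run N P prec asg tx"
begin

abbreviation "C \<equiv> chunks N P asg"
abbreviation "ed \<equiv> edgeOf asg"
abbreviation "w \<equiv> cw N P asg"

definition "adjacent_pending p e = {c \<in> Bset N P prec asg tx p. adj (ed c) e}"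
definition "heavy p e = {c \<in> adjacent_pending p e. w c \<ge> wt P p / real (dR N e)}"
definition "light p e = adjacent_pending p e - heavy p e"

lemma imp_eq:
  "imp N P prec asg tx p e =
     wt P p * (real (dSrc N (fst e)) + (real (dR N e) + 1) / 2 + real (dDst N (snd e)))
     + wt P p * real (card (heavy p e)) + real (dR N e) * sum w (light p e)"
  by (simp add: imp_def Let_def adjacent_pending_def heavy_def light_def)

lemma adjacent_pending_subset: "adjacent_pending p e \<subseteq> C"
  and heavy_subset: "heavy p e \<subseteq> C" and light_subset: "light p e \<subseteq> C"
  by (auto simp: adjacent_pending_def heavy_def light_def Bset_def)

lemma prec_asym: "(a, b) \<in> prec \<Longrightarrow> (b, a) \<notin> prec"
  using prec_order unfolding strict_linear_order_on_def trans_def irrefl_def by blast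

lemma prec_total: "a \<in> Pk P \<Longrightarrow> b \<in> Pk P \<Longrightarrow> a \<noteq> b \<Longrightarrow> (a, b) \<in> prec \<or> (b, a) \<in> prec"
  using prec_order unfolding strict_linear_order_on_def total_on_def by blast

lemma prec_rl_mono: "a \<in> Pk P \<Longrightarrow> b \<in> Pk P \<Longrightarrow> (a, b) \<in> prec \<Longrightarrow> rl P a \<le> rl P b"
  using prec_release prec_asym[of a b] by (cases "rl P b < rl P a") auto

lemma finite_packets: "finite (Pk P)"
  using wf by (simp add: wf_instance_def)

lemma finite_Trs: "finite (Trs N)" and finite_Rcv: "finite (Rcv N)"
  using wf by (simp_all add: wf_instance_def)

lemma wt_pos: "p \<in> Pk P \<Longrightarrow> wt P p > 0"
  using wf by (simp add: wf_instance_def)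

lemma rl_pos: "p \<in> Pk P \<Longrightarrow> rl P p \<ge> 1"
  using wf by (simp add: wf_instance_def)

lemma Ep_subset: "p \<in> Pk P \<Longrightarrow> Ep N P p \<subseteq> Trs N \<times> Rcv N"
  using wf by (auto simp: wf_instance_def Ep_def)

lemma dR_pos: "p \<in> Pk P \<Longrightarrow> e \<in> Ep N P p \<Longrightarrow> dR N e \<ge> 1"
  using wf by (auto simp: wf_instance_def Ep_def)

lemma proc_ok_packet: "p \<in> Pk P \<Longrightarrow> proc_ok N P prec asg tx p"
  using run by (simp add: alg_run_def)

lemma asg_SomeD:
  assumes "asg p = Some e"
  shows "p \<in> Pk P \<and> e \<in> Ep N P p"
proof -
  have p: "p \<in> Pk P"
    using run assms by (auto simp: alg_run_def)
  then show ?thesis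
    using proc_ok_packet[OF p] assms by (auto simp: proc_ok_def split: if_splits)
qed

lemma chunks_eq: "C = Sigma {p \<in> Pk P. asg p \<noteq> None} (\<lambda>p. {..<dR N (the (asg p))})"
  by (auto simp: chunks_def)

lemma finite_chunks: "finite C"
  unfolding chunks_eq using finite_packets by auto

lemma chunkD:
  assumes "c \<in> C"
  shows "fst c \<in> Pk P" "asg (fst c) = Some (ed c)" "ed c \<in> Ep N P (fst c)"
    "snd c < dR N (ed c)" "w c = wt P (fst c) / real (dR N (ed c))" "w c > 0"
proof -
  obtain e where e: "asg (fst c) = Some e" "snd c < dR N e"
    using assms by (auto simp: chunks_def)
  then have "ed c = e" "fst c \<in> Pk P" "e \<in> Ep N P (fst c)"
    using asg_SomeD by (auto simp: edgeOf_def)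
  then show "fst c \<in> Pk P" "asg (fst c) = Some (ed c)" "ed c \<in> Ep N P (fst c)"
    "snd c < dR N (ed c)" "w c = wt P (fst c) / real (dR N (ed c))" "w c > 0"
    using e wt_pos dR_pos by (auto simp: cw_def)
qed

lemma chunk_edge_in: "c \<in> C \<Longrightarrow> fst (ed c) \<in> Trs N \<and> snd (ed c) \<in> Rcv N"
  using Ep_subset[OF chunkD(1)] chunkD(3) by fastforce

lemma w_nonneg: "c \<in> C \<Longrightarrow> w c \<ge> 0"
  using chunkD(6) by fastforce

lemma finite_subset_chunks: "X \<subseteq> C \<Longrightarrow> finite X"
  using finite_chunks finite_subset by blast

lemma tx_ge_rl: "c \<in> C \<Longrightarrow> rl P (fst c) \<le> tx c"
  using run by (auto simp: alg_run_def)

lemma sched_ok_step: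
  assumes "c \<in> C" "rl P (fst c) \<le> \<tau>"
  shows "sched_ok N P prec asg tx \<tau>"
proof -
  have "\<tau> \<ge> 1"
    using rl_pos[OF chunkD(1)[OF assms(1)]] assms(2) by linarith
  then show ?thesis
    using run by (simp add: alg_run_def)
qed

lemma sent_together_nonadj:
  assumes "c1 \<in> C" "c2 \<in> C" "tx c1 = tx c2" "c1 \<noteq> c2"
  shows "\<not> adj (ed c1) (ed c2)"
proof -
  obtain L where "{c \<in> C. tx c = tx c1} = greedy ed L"
    using sched_ok_step[OF assms(1) tx_ge_rl[OF assms(1)]] unfolding sched_ok_def by (elim exE conjE)
  then have "c1 \<in> greedy ed L" "c2 \<in> greedy ed L"
    using assms by auto
  then show ?thesis
    using assms(4) by (rule greedy_nonadj)
qed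

lemma blocked_step:
  assumes "c \<in> C" "rl P (fst c) \<le> \<tau>" "\<tau> < tx c"
  shows "\<exists>b\<in>C. tx b = \<tau> \<and> adj (ed b) (ed c) \<and> \<not> chunk_before N P prec asg c b"
proof -
  obtain L where L: "set L = pending N P asg tx \<tau>"
    "sorted_wrt (\<lambda>a b. \<not> chunk_before N P prec asg b a) L" "{c \<in> C. tx c = \<tau>} = greedy ed L"
    using sched_ok_step[OF assms(1,2)] unfolding sched_ok_def by (elim exE conjE)
  have "c \<in> set L"
    using L(1) assms by (simp add: pending_def)
  moreover have "c \<notin> greedy ed L"
    unfolding L(3)[symmetric] using assms(3) by simp
  ultimately obtain i j where ij: "i < j" "j < length L" "L ! j = c" "L ! i \<in> greedy ed L"
    "adj (ed (L ! i)) (ed c)"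
    by (blast dest: greedy_blocked)
  have "\<not> chunk_before N P prec asg (L ! j) (L ! i)"
    using L(2) ij(1,2) by (simp add: sorted_wrt_iff_nth_less)
  moreover have "L ! i \<in> {c \<in> C. tx c = \<tau>}"
    unfolding L(3) by (rule ij(4))
  ultimately show ?thesis
    using ij(3,5) by blast
qed

definition "blockers c = {b \<in> C. adj (ed b) (ed c) \<and> \<not> chunk_before N P prec asg c b
                                 \<and> rl P (fst c) \<le> tx b \<and> tx b < tx c}"
definition "own_blockers c = {b \<in> blockers c. fst b = fst c}"
definition "earlier_blockers c = {b \<in> blockers c. (fst b, fst c) \<in> prec}"
definition "later_blockers c = {b \<in> blockers c. (fst c, fst b) \<in> prec}"

lemma blockers_subset: "blockers c \<subseteq> C"
  by (auto simp: blockers_def)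

lemma waiting_le_card_blockers:
  assumes "c \<in> C"
  shows "real (tx c) - real (rl P (fst c)) \<le> real (card (blockers c))"
proof -
  have "{rl P (fst c)..<tx c} \<subseteq> tx ` blockers c"
  proof
    fix \<tau> assume \<tau>: "\<tau> \<in> {rl P (fst c)..<tx c}"
    then obtain b where "b \<in> C" "tx b = \<tau>" "adj (ed b) (ed c)" "\<not> chunk_before N P prec asg c b"
      using blocked_step[OF assms, of \<tau>] by auto
    with \<tau> show "\<tau> \<in> tx ` blockers c"
      unfolding blockers_def by force
  qed
  then have "card {rl P (fst c)..<tx c} \<le> card (blockers c)"
    using finite_subset_chunks[OF blockers_subset] by (meson card_image_le card_mono finite_imageI le_trans)
  then show ?thesis
    by simp
qed

lemma card_blockers_le:
  assumes "c \<in> C"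
  shows "card (blockers c) \<le> card (own_blockers c) + card (earlier_blockers c) + card (later_blockers c)"
proof -
  have "blockers c = own_blockers c \<union> earlier_blockers c \<union> later_blockers c"
    unfolding own_blockers_def earlier_blockers_def later_blockers_def
    using prec_total chunkD(1) assms blockers_subset by blast
  then show ?thesis
    by (metis card_Un_le add_le_mono1 order_trans)
qed

lemma own_blockers_card_le:
  "card (own_blockers c) \<le> card {j \<in> {..<dR N (ed c)}. tx (fst c, j) < tx c}"
proof -
  have "own_blockers c \<subseteq> Pair (fst c) ` {j \<in> {..<dR N (ed c)}. tx (fst c, j) < tx c}"
  proof
    fix b assume "b \<in> own_blockers c"
    then have b: "b \<in> C" "fst b = fst c" "tx b < tx c"
      by (simp_all add: own_blockers_def blockers_def)
    obtain j where j: "b = (fst c, j)"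
      using b(2) by (metis prod.collapse)
    have "j < dR N (ed c)"
      using chunkD(4)[OF b(1)] j by (simp add: edgeOf_def)
    then show "b \<in> Pair (fst c) ` {j \<in> {..<dR N (ed c)}. tx (fst c, j) < tx c}"
      using b(3) j by simp
  qed
  then have "card (own_blockers c) \<le> card (Pair (fst c) ` {j \<in> {..<dR N (ed c)}. tx (fst c, j) < tx c})"
    by (intro card_mono) auto
  also have "\<dots> \<le> card {j \<in> {..<dR N (ed c)}. tx (fst c, j) < tx c}"
    by (rule card_image_le) simp
  finally show ?thesis .
qed

lemma earlier_blockers_heavy:
  assumes "c \<in> C"
  shows "earlier_blockers c \<subseteq> heavy (fst c) (ed c)"
proof
  fix b assume "b \<in> earlier_blockers c"
  then have b: "b \<in> C" "adj (ed b) (ed c)" "\<not> chunk_before N P prec asg c b"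
    "rl P (fst c) \<le> tx b" "(fst b, fst c) \<in> prec"
    by (auto simp: earlier_blockers_def blockers_def)
  then have "w b \<ge> w c"
    by (auto simp: chunk_before_def)
  then show "b \<in> heavy (fst c) (ed c)"
    using b chunkD(5)[OF assms] by (auto simp: heavy_def adjacent_pending_def Bset_def)
qed

text \<open>A blocker of a later packet is charged to that packet: the blocked chunk was still
  pending and lighter when the later packet was processed.\<close>
lemma later_blocker_light:
  assumes "c \<in> C" "b \<in> later_blockers c"
  shows "c \<in> light (fst b) (ed b)"
proof -
  have b: "b \<in> C" "adj (ed b) (ed c)" "\<not> chunk_before N P prec asg c b" "tx b < tx c"
    "(fst c, fst b) \<in> prec"
    using assms(2) by (auto simp: later_blockers_def blockers_def)
  then have "w c < w b"
    by (auto simp: chunk_before_def)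
  moreover have "rl P (fst b) \<le> tx c"
    using tx_ge_rl[OF b(1)] b(4) by simp
  ultimately show ?thesis
    using assms(1) b chunkD(5)[OF b(1)]
    by (auto simp: light_def heavy_def adjacent_pending_def Bset_def adj_sym)
qed

section \<open>Charging the cost to the packets\<close>

abbreviation "assigned \<equiv> {p \<in> Pk P. asg p \<noteq> None}"
abbreviation "edge p \<equiv> the (asg p)"

lemma assignedD:
  assumes "p \<in> assigned"
  shows "edge p \<in> Ep N P p" "dR N (edge p) \<ge> 1"
  using assms asg_SomeD dR_pos by fastforce+

lemma chunk_of_assigned:
  assumes "p \<in> assigned" "i < dR N (edge p)"
  shows "(p, i) \<in> C" "ed (p, i) = edge p" "w (p, i) = wt P p / real (dR N (edge p))"
  using assms by (auto simp: chunks_def edgeOf_def cw_def)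

lemma sum_chunks: "(\<Sum>c\<in>C. f c) = (\<Sum>p\<in>assigned. \<Sum>i<dR N (edge p). f (p, i))"
  unfolding chunks_eq by (subst sum.Sigma) (auto simp: finite_packets)

definition "chunk_cost c =
  w c * (real (tx c + 1 + dSrc N (fst (ed c)) + dDst N (snd (ed c))) - real (rl P (fst c)))"

lemma alg_cost_eq:
  "alg_cost N P asg tx =
     (\<Sum>p\<in>{p \<in> Pk P. asg p = None}. wt P p * real (ellp N P p)) + (\<Sum>c\<in>C. chunk_cost c)"
  by (simp add: alg_cost_def chunk_cost_def)

lemma chunk_cost_le_blockers:
  assumes "c \<in> C"
  shows "chunk_cost c \<le> w c * (1 + real (dSrc N (fst (ed c))) + real (dDst N (snd (ed c))))
    + w c * card (own_blockers c) + w c * card (earlier_blockers c) + w c * card (later_blockers c)"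
proof -
  have "real (tx c) - real (rl P (fst c))
      \<le> card (own_blockers c) + card (earlier_blockers c) + card (later_blockers c)"
    using waiting_le_card_blockers[OF assms] card_blockers_le[OF assms] by linarith
  then have "w c * (real (tx c) - real (rl P (fst c)))
      \<le> w c * (card (own_blockers c) + card (earlier_blockers c) + card (later_blockers c))"
    using w_nonneg[OF assms] by (rule mult_left_mono)
  then show ?thesis
    unfolding chunk_cost_def by (simp add: algebra_simps)
qed

text \<open>The chunks of one packet are sent at distinct steps, so on average each waits for
  half of its siblings.\<close>
lemma own_blockers_weight_le:
  assumes p: "p \<in> assigned"
  defines "d \<equiv> dR N (edge p)"
  shows "(\<Sum>i<d. w (p, i) * card (own_blockers (p, i))) \<le> wt P p * (real d - 1) / 2"
proof -
  have d: "d \<ge> 1"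
    using assignedD(2)[OF p] by (simp add: d_def)
  have "inj_on (\<lambda>j. tx (p, j)) {..<d}"
  proof (rule inj_onI)
    fix i j assume "i \<in> {..<d}" "j \<in> {..<d}" "tx (p, i) = tx (p, j)"
    then show "i = j"
      using sent_together_nonadj[of "(p, i)" "(p, j)"] chunk_of_assigned[OF p]
      by (auto simp: d_def adj_def)
  qed
  then have pairs: "2 * (\<Sum>i<d. card {j\<in>{..<d}. tx (p, j) < tx (p, i)}) = d * d - d"
    using sum_card_less_inj[of "{..<d}"] by simp
  have "(\<Sum>i<d. w (p, i) * card (own_blockers (p, i)))
      \<le> (\<Sum>i<d. wt P p / real d * card {j\<in>{..<d}. tx (p, j) < tx (p, i)})"
  proof (rule sum_mono)
    fix i assume "i \<in> {..<d}"
    then have "w (p, i) = wt P p / real d" "ed (p, i) = edge p"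
      using chunk_of_assigned[OF p] by (simp_all add: d_def)
    moreover have "wt P p / real d \<ge> 0"
      using wt_pos[of p] p by simp
    moreover have "card (own_blockers (p, i)) \<le> card {j\<in>{..<d}. tx (p, j) < tx (p, i)}"
      using own_blockers_card_le[of "(p, i)"] \<open>ed (p, i) = edge p\<close> by (simp add: d_def)
    ultimately show "w (p, i) * card (own_blockers (p, i))
        \<le> wt P p / real d * card {j\<in>{..<d}. tx (p, j) < tx (p, i)}"
      by (simp only: mult_left_mono of_nat_mono)
  qed
  also have "\<dots> = wt P p / real d * real (\<Sum>i<d. card {j\<in>{..<d}. tx (p, j) < tx (p, i)})"
    by (simp add: sum_distrib_left)
  also have "real (\<Sum>i<d. card {j\<in>{..<d}. tx (p, j) < tx (p, i)}) = (real d * real d - real d) / 2"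
    using arg_cong[OF pairs, of real] d by (simp add: of_nat_diff)
  also have "wt P p / real d * ((real d * real d - real d) / 2) = wt P p * (real d - 1) / 2"
    using d by (simp add: field_simps)
  finally show ?thesis .
qed

lemma earlier_blockers_weight_le:
  assumes p: "p \<in> assigned"
  shows "(\<Sum>i<dR N (edge p). w (p, i) * card (earlier_blockers (p, i)))
    \<le> wt P p * card (heavy p (edge p))"
proof -
  have "(\<Sum>i<dR N (edge p). w (p, i) * card (earlier_blockers (p, i)))
      \<le> (\<Sum>i<dR N (edge p). wt P p / real (dR N (edge p)) * card (heavy p (edge p)))"
  proof (rule sum_mono)
    fix i assume "i \<in> {..<dR N (edge p)}"
    then have i: "(p, i) \<in> C" "ed (p, i) = edge p" "w (p, i) = wt P p / real (dR N (edge p))"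
      using chunk_of_assigned[OF p] by auto
    have "card (earlier_blockers (p, i)) \<le> card (heavy p (edge p))"
      using earlier_blockers_heavy[OF i(1)] i(2) finite_subset_chunks[OF heavy_subset]
      by (intro card_mono) auto
    moreover have "wt P p / real (dR N (edge p)) \<ge> 0"
      using wt_pos[of p] p by simp
    ultimately show "w (p, i) * card (earlier_blockers (p, i))
        \<le> wt P p / real (dR N (edge p)) * card (heavy p (edge p))"
      unfolding i(3) by (simp only: mult_left_mono of_nat_mono)
  qed
  also have "\<dots> = wt P p * card (heavy p (edge p))"
    using assignedD(2)[OF p] by simp
  finally show ?thesis .
qed

lemma later_blockers_weight_le:
  "(\<Sum>c\<in>C. w c * card (later_blockers c)) \<le> (\<Sum>p\<in>assigned. real (dR N (edge p)) * sum w (light p (edge p)))"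
proof -
  have "later_blockers c \<subseteq> C" for c
    using blockers_subset[of c] by (auto simp: later_blockers_def)
  then have "(\<Sum>c\<in>C. w c * card (later_blockers c)) = (\<Sum>c\<in>C. \<Sum>b\<in>C. if b \<in> later_blockers c then w c else 0)"
    by (intro sum.cong[OF refl], subst sum.inter_restrict[OF finite_chunks, symmetric]) (simp add: Int_absorb1)
  also have "\<dots> = (\<Sum>b\<in>C. \<Sum>c\<in>C. if b \<in> later_blockers c then w c else 0)"
    by (rule sum.swap)
  also have "\<dots> \<le> (\<Sum>b\<in>C. \<Sum>c\<in>C. if c \<in> light (fst b) (ed b) then w c else 0)"
    by (intro sum_mono) (auto intro: w_nonneg dest: later_blocker_light)
  also have "\<dots> = (\<Sum>b\<in>C. sum w (light (fst b) (ed b)))"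
    using light_subset
    by (intro sum.cong[OF refl], subst sum.inter_restrict[OF finite_chunks, symmetric]) (simp add: Int_absorb1)
  also have "\<dots> = (\<Sum>p\<in>assigned. real (dR N (edge p)) * sum w (light p (edge p)))"
    by (simp add: sum_chunks edgeOf_def)
  finally show ?thesis .
qed

lemma chunk_costs_le_imp:
  "(\<Sum>c\<in>C. chunk_cost c) \<le> (\<Sum>p\<in>assigned. imp N P prec asg tx p (edge p))"
proof -
  define base where "base c = w c * (1 + real (dSrc N (fst (ed c))) + real (dDst N (snd (ed c))))" for c
  define bound where "bound p = wt P p * (1 + real (dSrc N (fst (edge p))) + real (dDst N (snd (edge p))))
      + wt P p * (real (dR N (edge p)) - 1) / 2 + wt P p * card (heavy p (edge p))" for p
  have "(\<Sum>c\<in>C. chunk_cost c) \<le> (\<Sum>c\<in>C. base c + w c * card (own_blockers c)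
      + w c * card (earlier_blockers c) + w c * card (later_blockers c))"
    unfolding base_def by (intro sum_mono chunk_cost_le_blockers)
  also have "\<dots> = (\<Sum>p\<in>assigned. \<Sum>i<dR N (edge p). base (p, i) + w (p, i) * card (own_blockers (p, i))
      + w (p, i) * card (earlier_blockers (p, i))) + (\<Sum>c\<in>C. w c * card (later_blockers c))"
    by (simp add: sum.distrib sum_chunks)
  also have "\<dots> \<le> (\<Sum>p\<in>assigned. bound p)
      + (\<Sum>p\<in>assigned. real (dR N (edge p)) * sum w (light p (edge p)))"
  proof (intro add_mono sum_mono later_blockers_weight_le)
    fix p assume p: "p \<in> assigned"
    have "(\<Sum>i<dR N (edge p). base (p, i))
        = wt P p * (1 + real (dSrc N (fst (edge p))) + real (dDst N (snd (edge p))))"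
      using assignedD(2)[OF p] by (simp add: base_def chunk_of_assigned[OF p])
    then show "(\<Sum>i<dR N (edge p). base (p, i) + w (p, i) * card (own_blockers (p, i))
        + w (p, i) * card (earlier_blockers (p, i))) \<le> bound p"
      using own_blockers_weight_le[OF p] earlier_blockers_weight_le[OF p]
      by (simp add: sum.distrib bound_def)
  qed
  also have "\<dots> = (\<Sum>p\<in>assigned. imp N P prec asg tx p (edge p))"
    by (simp add: sum.distrib[symmetric] bound_def imp_eq field_simps)
  finally show ?thesis .
qed

text \<open>Half of \<open>charge p\<close> is the dual variable of \<open>p\<close>.\<close>
definition "charge p = (case asg p of None \<Rightarrow> wt P p * real (ellp N P p)
                                    | Some e \<Rightarrow> imp N P prec asg tx p e)"

lemma charge_assigned: "p \<in> assigned \<Longrightarrow> charge p = imp N P prec asg tx p (edge p)"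
  by (auto simp: charge_def)

lemma alg_cost_le_charges: "alg_cost N P asg tx \<le> (\<Sum>p\<in>Pk P. charge p)"
proof -
  have "(\<Sum>c\<in>C. chunk_cost c) \<le> (\<Sum>p\<in>assigned. charge p)"
    using chunk_costs_le_imp by (simp add: charge_assigned)
  moreover have "(\<Sum>p\<in>{p \<in> Pk P. asg p = None}. wt P p * real (ellp N P p))
      = (\<Sum>p\<in>{p \<in> Pk P. asg p = None}. charge p)"
    by (simp add: charge_def)
  moreover have "(\<Sum>p\<in>Pk P. charge p)
      = (\<Sum>p\<in>{p \<in> Pk P. asg p = None}. charge p) + (\<Sum>p\<in>assigned. charge p)"
  proof -
    have "Pk P = {p \<in> Pk P. asg p = None} \<union> assigned"
      by blast
    then show ?thesis
      using finite_packets by (metis (no_types, lifting) sum.union_disjoint disjoint_iff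
          finite_Un mem_Collect_eq)
  qed
  ultimately show ?thesis
    unfolding alg_cost_eq by linarith
qed

lemma chunk_costs_le_alg_cost: "(\<Sum>c\<in>C. chunk_cost c) \<le> alg_cost N P asg tx"
proof -
  have "(\<Sum>p\<in>{p \<in> Pk P. asg p = None}. wt P p * real (ellp N P p)) \<ge> 0"
    using wt_pos by (intro sum_nonneg) (simp add: less_imp_le)
  then show ?thesis
    unfolding alg_cost_eq by simp
qed

lemma charge_choice:
  assumes "p \<in> Pk P"
  obtains e where "e \<in> Ep N P p" "\<forall>e'\<in>Ep N P p. imp N P prec asg tx p e \<le> imp N P prec asg tx p e'"
    "charge p = (if p \<in> PiL N P \<and> wt P p * real (ellp N P p) \<le> imp N P prec asg tx p e
                 then wt P p * real (ellp N P p) else imp N P prec asg tx p e)"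
proof -
  obtain e where "e \<in> Ep N P p" "\<forall>e'\<in>Ep N P p. imp N P prec asg tx p e \<le> imp N P prec asg tx p e'"
    "if p \<in> PiL N P \<and> wt P p * real (ellp N P p) \<le> imp N P prec asg tx p e
     then asg p = None else asg p = Some e"
    using proc_ok_packet[OF assms] unfolding proc_ok_def by blast
  then show ?thesis
    using that by (simp add: charge_def split: if_splits)
qed

lemma charge_le_imp:
  assumes "p \<in> Pk P" "e \<in> Ep N P p"
  shows "charge p \<le> imp N P prec asg tx p e"
proof -
  obtain e' where "imp N P prec asg tx p e' \<le> imp N P prec asg tx p e"
    "charge p = (if p \<in> PiL N P \<and> wt P p * real (ellp N P p) \<le> imp N P prec asg tx p e'
                 then wt P p * real (ellp N P p) else imp N P prec asg tx p e')"
    using charge_choice[OF assms(1)] assms(2) by metis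
  then show ?thesis
    by (simp split: if_splits)
qed

lemma charge_le_latency:
  assumes "p \<in> PiL N P"
  shows "charge p \<le> wt P p * real (ellp N P p)"
proof -
  have "p \<in> Pk P"
    using assms by (simp add: PiL_def)
  then obtain e' where "charge p = (if wt P p * real (ellp N P p) \<le> imp N P prec asg tx p e'
                 then wt P p * real (ellp N P p) else imp N P prec asg tx p e')"
    using charge_choice assms by metis
  then show ?thesis
    by simp
qed

lemma imp_nonneg:
  assumes "p \<in> Pk P"
  shows "imp N P prec asg tx p e \<ge> 0"
proof -
  have "sum w (light p e) \<ge> 0"
    using light_subset[of p e] by (intro sum_nonneg w_nonneg) auto
  then show ?thesis
    unfolding imp_eq using wt_pos[OF assms] by simp
qed

lemma charge_nonneg: "p \<in> Pk P \<Longrightarrow> charge p \<ge> 0"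
  using wt_pos imp_nonneg by (simp add: charge_def less_imp_le split: option.splits)

section \<open>Dual fitting\<close>

lemma heavy_light_sum:
  assumes "dR N e \<ge> 1"
  shows "wt P p * card (heavy p e) + real (dR N e) * sum w (light p e)
    = (\<Sum>c\<in>adjacent_pending p e. min (wt P p) (real (dR N e) * w c))"
proof -
  let ?g = "\<lambda>c. min (wt P p) (real (dR N e) * w c)"
  have fin: "finite (adjacent_pending p e)"
    by (rule finite_subset_chunks[OF adjacent_pending_subset])
  have "?g c = wt P p" if "c \<in> heavy p e" for c
    using that assms by (simp add: heavy_def field_simps)
  moreover have "?g c = real (dR N e) * w c" if "c \<in> light p e" for c
    using that assms by (auto simp: light_def heavy_def field_simps min_def)
  moreover have "adjacent_pending p e = heavy p e \<union> light p e" "heavy p e \<inter> light p e = {}"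
    by (auto simp: light_def heavy_def)
  ultimately show ?thesis
    using fin by (simp add: sum.union_disjoint sum_distrib_left)
qed

lemma card_sent_at_le_1:
  assumes "\<And>c c'. c \<in> X \<Longrightarrow> c' \<in> X \<Longrightarrow> adj (ed c) (ed c')" "X \<subseteq> {c \<in> C. tx c = \<sigma>}"
  shows "card X \<le> 1"
proof -
  have "finite X"
    using assms(2) finite_subset_chunks by blast
  moreover have "c = c'" if "c \<in> X" "c' \<in> X" for c c'
    using sent_together_nonadj assms that by blast
  ultimately show ?thesis
    by (simp add: card_le_Suc0_iff_eq)
qed

text \<open>At each step at most one chunk leaves the transmitter of \<open>e\<close> and at most one
  enters its receiver.\<close>
lemma card_adjacent_sent_before:
  "card {c \<in> adjacent_pending p e. tx c < \<tau>} \<le> 2 * (\<tau> - rl P p)"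
proof -
  define at_trs where "at_trs \<sigma> = {c \<in> C. tx c = \<sigma> \<and> fst (ed c) = fst e}" for \<sigma>
  define at_rcv where "at_rcv \<sigma> = {c \<in> C. tx c = \<sigma> \<and> snd (ed c) = snd e}" for \<sigma>
  have "{c \<in> adjacent_pending p e. tx c < \<tau>} \<subseteq> (\<Union>\<sigma>\<in>{rl P p..<\<tau>}. at_trs \<sigma> \<union> at_rcv \<sigma>)"
    by (auto simp: adjacent_pending_def Bset_def at_trs_def at_rcv_def adj_def)
  then have "card {c \<in> adjacent_pending p e. tx c < \<tau>} \<le> card (\<Union>\<sigma>\<in>{rl P p..<\<tau>}. at_trs \<sigma> \<union> at_rcv \<sigma>)"
    by (intro card_mono) (auto intro: finite_subset_chunks simp: at_trs_def at_rcv_def)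
  also have "\<dots> \<le> (\<Sum>\<sigma>\<in>{rl P p..<\<tau>}. card (at_trs \<sigma> \<union> at_rcv \<sigma>))"
    by (rule card_UN_le) simp
  also have "\<dots> \<le> (\<Sum>\<sigma>\<in>{rl P p..<\<tau>}. 2)"
  proof (rule sum_mono)
    fix \<sigma>
    have "card (at_trs \<sigma>) \<le> 1" "card (at_rcv \<sigma>) \<le> 1"
      unfolding at_trs_def at_rcv_def by (rule card_sent_at_le_1[where \<sigma>=\<sigma>]; auto simp: adj_def)+
    then show "card (at_trs \<sigma> \<union> at_rcv \<sigma>) \<le> 2"
      using card_Un_le[of "at_trs \<sigma>" "at_rcv \<sigma>"] by simp
  qed
  finally show ?thesis
    by simp
qed

definition "trs_backlog \<tau> t = sum w {c \<in> pending N P asg tx \<tau>. fst (ed c) = t}"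
definition "rcv_backlog \<tau> r = sum w {c \<in> pending N P asg tx \<tau>. snd (ed c) = r}"

lemma adjacent_pending_backlog:
  assumes "p \<in> Pk P" "rl P p \<le> \<tau>"
  shows "sum w {c \<in> adjacent_pending p e. \<tau> \<le> tx c} \<le> trs_backlog \<tau> (fst e) + rcv_backlog \<tau> (snd e)"
proof -
  let ?Xt = "{c \<in> pending N P asg tx \<tau>. fst (ed c) = fst e}"
  let ?Xr = "{c \<in> pending N P asg tx \<tau>. snd (ed c) = snd e}"
  have fin: "finite ?Xt" "finite ?Xr"
    by (auto intro: finite_subset_chunks simp: pending_def)
  have "{c \<in> adjacent_pending p e. \<tau> \<le> tx c} \<subseteq> ?Xt \<union> ?Xr"
  proof
    fix c assume c: "c \<in> {c \<in> adjacent_pending p e. \<tau> \<le> tx c}"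
    then have "c \<in> C" "(fst c, p) \<in> prec" "adj (ed c) e" "\<tau> \<le> tx c"
      by (auto simp: adjacent_pending_def Bset_def)
    moreover from this have "rl P (fst c) \<le> \<tau>"
      using prec_rl_mono[OF chunkD(1) assms(1)] assms(2) by fastforce
    ultimately show "c \<in> ?Xt \<union> ?Xr"
      by (auto simp: pending_def adj_def)
  qed
  then have "sum w {c \<in> adjacent_pending p e. \<tau> \<le> tx c} \<le> sum w (?Xt \<union> ?Xr)"
    using fin by (intro sum_mono2) (auto intro: w_nonneg simp: pending_def)
  also have "\<dots> \<le> sum w ?Xt + sum w ?Xr"
  proof -
    have "sum w (?Xt \<inter> ?Xr) \<ge> 0"
      by (intro sum_nonneg w_nonneg) (auto simp: pending_def)
    then show ?thesis
      using fin by (simp add: sum_Un)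
  qed
  finally show ?thesis
    by (simp add: trs_backlog_def rcv_backlog_def)
qed

lemma imp_le_backlog:
  assumes p: "p \<in> Pk P" and e: "e \<in> Ep N P p" and \<tau>: "rl P p \<le> \<tau>"
  shows "imp N P prec asg tx p e \<le> wt P p * real (Delta N e) + 2 * wt P p * (real \<tau> - real (rl P p))
     + real (dR N e) * (trs_backlog \<tau> (fst e) + rcv_backlog \<tau> (snd e))"
proof -
  define W where "W = wt P p"
  define d where "d = real (dR N e)"
  define g where "g c = min W (d * w c)" for c
  let ?A = "adjacent_pending p e"
  have W: "W > 0" and d: "d \<ge> 1"
    using wt_pos[OF p] dR_pos[OF p e] by (simp_all add: W_def d_def)
  have fin: "finite ?A"
    by (rule finite_subset_chunks[OF adjacent_pending_subset])
  have "(\<Sum>c\<in>{c \<in> ?A. tx c < \<tau>}. g c) \<le> W * card {c \<in> ?A. tx c < \<tau>}"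
    using sum_bounded_above[of "{c \<in> ?A. tx c < \<tau>}" g W] by (simp add: g_def mult.commute)
  also have "\<dots> \<le> W * (2 * (real \<tau> - real (rl P p)))"
    using card_adjacent_sent_before[of p e \<tau>] \<tau> W by (simp add: of_nat_diff)
  finally have early: "(\<Sum>c\<in>{c \<in> ?A. tx c < \<tau>}. g c) \<le> W * (2 * (real \<tau> - real (rl P p)))" .
  have "(\<Sum>c\<in>{c \<in> ?A. \<tau> \<le> tx c}. g c) \<le> d * sum w {c \<in> ?A. \<tau> \<le> tx c}"
    by (simp add: g_def sum_distrib_left sum_mono)
  also have "\<dots> \<le> d * (trs_backlog \<tau> (fst e) + rcv_backlog \<tau> (snd e))"
    using adjacent_pending_backlog[OF p \<tau>] d by simp
  finally have late: "(\<Sum>c\<in>{c \<in> ?A. \<tau> \<le> tx c}. g c) \<le> d * (trs_backlog \<tau> (fst e) + rcv_backlog \<tau> (snd e))" .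
  have "(\<Sum>c\<in>?A. g c) = (\<Sum>c\<in>{c \<in> ?A. tx c < \<tau>}. g c) + (\<Sum>c\<in>{c \<in> ?A. \<tau> \<le> tx c}. g c)"
    using fin by (subst sum.union_disjoint[symmetric]) (auto intro: sum.cong)
  moreover have "imp N P prec asg tx p e
      = W * (real (dSrc N (fst e)) + (d + 1) / 2 + real (dDst N (snd e))) + (\<Sum>c\<in>?A. g c)"
    using heavy_light_sum[OF dR_pos[OF p e], of p]
    by (simp add: imp_eq W_def d_def g_def add.assoc)
  moreover have "W * (real (dSrc N (fst e)) + (d + 1) / 2 + real (dDst N (snd e))) \<le> W * real (Delta N e)"
    using W d by (intro mult_left_mono) (auto simp: Delta_def d_def)
  ultimately show ?thesis
    using early late by (simp add: W_def d_def algebra_simps)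
qed

lemma charge_le_backlog:
  assumes "p \<in> Pk P" "e \<in> Ep N P p" "rl P p \<le> \<tau>"
  shows "charge p / 2 \<le> wt P p * (real \<tau> + real (Delta N e) - real (rl P p))
    + real (dR N e) * (trs_backlog \<tau> (fst e) + rcv_backlog \<tau> (snd e)) / 2"
proof -
  have "wt P p * real (Delta N e) \<ge> 0"
    using wt_pos[OF assms(1)] by simp
  moreover have "wt P p * (real \<tau> + real (Delta N e) - real (rl P p))
      = wt P p * (real \<tau> - real (rl P p)) + wt P p * real (Delta N e)"
    by (simp add: algebra_simps)
  ultimately show ?thesis
    using charge_le_imp[OF assms(1,2)] imp_le_backlog[OF assms] unfolding mult.assoc by linarith
qed

lemma pending_weight_total_le: "(\<Sum>\<tau>\<le>H. sum w (pending N P asg tx \<tau>)) \<le> (\<Sum>c\<in>C. chunk_cost c)"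
proof -
  have "(\<Sum>\<tau>\<le>H. sum w (pending N P asg tx \<tau>))
      = (\<Sum>c\<in>C. \<Sum>\<tau>\<in>{\<tau>\<in>{..H}. rl P (fst c) \<le> \<tau> \<and> \<tau> \<le> tx c}. w c)"
    unfolding pending_def by (rule sum.swap_restrict) (simp_all add: finite_chunks)
  also have "\<dots> = (\<Sum>c\<in>C. w c * card {\<tau>\<in>{..H}. c \<in> pending N P asg tx \<tau>})"
    by (intro sum.cong refl) (auto simp: pending_def mult.commute intro: arg_cong[where f=card])
  also have "\<dots> \<le> (\<Sum>c\<in>C. chunk_cost c)"
  proof (rule sum_mono)
    fix c assume c: "c \<in> C"
    have "card {\<tau>\<in>{..H}. c \<in> pending N P asg tx \<tau>} \<le> card {rl P (fst c)..tx c}"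
      by (intro card_mono) (auto simp: pending_def)
    then have "real (card {\<tau>\<in>{..H}. c \<in> pending N P asg tx \<tau>}) \<le> real (tx c) + 1 - real (rl P (fst c))"
      using tx_ge_rl[OF c] by (simp add: of_nat_diff)
    then show "w c * card {\<tau>\<in>{..H}. c \<in> pending N P asg tx \<tau>} \<le> chunk_cost c"
      unfolding chunk_cost_def using w_nonneg[OF c] by (intro mult_left_mono) auto
  qed
  finally show ?thesis .
qed

lemma trs_backlog_total_le: "(\<Sum>\<tau>\<le>H. \<Sum>t\<in>Trs N. trs_backlog \<tau> t) \<le> (\<Sum>c\<in>C. chunk_cost c)"
proof -
  have "(\<Sum>t\<in>Trs N. trs_backlog \<tau> t) = sum w (pending N P asg tx \<tau>)" for \<tau>
    unfolding trs_backlog_def using finite_Trs chunk_edge_in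
    by (intro sum.group) (auto simp: pending_def intro: finite_subset_chunks)
  then show ?thesis
    using pending_weight_total_le by simp
qed

lemma rcv_backlog_total_le: "(\<Sum>\<tau>\<le>H. \<Sum>r\<in>Rcv N. rcv_backlog \<tau> r) \<le> (\<Sum>c\<in>C. chunk_cost c)"
proof -
  have "(\<Sum>r\<in>Rcv N. rcv_backlog \<tau> r) = sum w (pending N P asg tx \<tau>)" for \<tau>
    unfolding rcv_backlog_def using finite_Rcv chunk_edge_in
    by (intro sum.group) (auto simp: pending_def intro: finite_subset_chunks)
  then show ?thesis
    using pending_weight_total_le by simp
qed

end

locale lp_fitting = alg_execution N P prec asg tx
  for N :: "('s,'t,'r,'d) network" and P :: "('p,'s,'d) packets"
    and prec :: "('p \<times> 'p) set"
    and asg :: "'p \<Rightarrow> ('t \<times> 'r) option" and tx :: "'p \<times> nat \<Rightarrow> nat" +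
  fixes \<epsilon> :: real and H :: nat
    and x :: "'p \<Rightarrow> 't \<times> 'r \<Rightarrow> nat \<Rightarrow> real" and y :: "'p \<Rightarrow> real"
  assumes feasible: "lp_feasible N P \<epsilon> H x y"
    and eps_pos: "\<epsilon> > 0"
begin

lemma x_nonneg: "p \<in> Pk P \<Longrightarrow> e \<in> Ep N P p \<Longrightarrow> \<tau> \<in> {rl P p..H} \<Longrightarrow> x p e \<tau> \<ge> 0"
  using feasible by (simp add: lp_feasible_def)

lemma fixed_link_cover: "p \<in> PiL N P \<Longrightarrow> (\<Sum>e\<in>Ep N P p. \<Sum>\<tau>\<in>{rl P p..H}. x p e \<tau>) + y p \<ge> 1"
  using feasible by (simp add: lp_feasible_def)

lemma reconf_cover: "p \<in> Pk P - PiL N P \<Longrightarrow> (\<Sum>e\<in>Ep N P p. \<Sum>\<tau>\<in>{rl P p..H}. x p e \<tau>) \<ge> 1"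
  using feasible by (simp add: lp_feasible_def)

lemma y_nonneg: "p \<in> PiL N P \<Longrightarrow> y p \<ge> 0"
  using feasible by (simp add: lp_feasible_def)

lemma charges_le_fractional:
  "(\<Sum>p\<in>Pk P. charge p) / 2 \<le> (\<Sum>p\<in>Pk P. \<Sum>e\<in>Ep N P p. \<Sum>\<tau>\<in>{rl P p..H}. x p e \<tau> * (charge p / 2))
     + (\<Sum>p\<in>PiL N P. wt P p * real (ellp N P p) * y p)"
proof -
  have PiL_sub: "PiL N P \<subseteq> Pk P"
    by (auto simp: PiL_def)
  have "charge p / 2 \<le> (\<Sum>e\<in>Ep N P p. \<Sum>\<tau>\<in>{rl P p..H}. x p e \<tau>) * (charge p / 2)
      + (if p \<in> PiL N P then wt P p * real (ellp N P p) * y p else 0)" if p: "p \<in> Pk P" for p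
  proof (cases "p \<in> PiL N P")
    case True
    have "charge p / 2 \<le> ((\<Sum>e\<in>Ep N P p. \<Sum>\<tau>\<in>{rl P p..H}. x p e \<tau>) + y p) * (charge p / 2)"
      using fixed_link_cover[OF True] charge_nonneg[OF p] by (simp add: mult_le_cancel_right1)
    also have "\<dots> \<le> (\<Sum>e\<in>Ep N P p. \<Sum>\<tau>\<in>{rl P p..H}. x p e \<tau>) * (charge p / 2)
        + wt P p * real (ellp N P p) * y p"
    proof -
      have "charge p / 2 \<le> wt P p * real (ellp N P p)"
        using charge_le_latency[OF True] charge_nonneg[OF p] by linarith
      then have "charge p / 2 * y p \<le> wt P p * real (ellp N P p) * y p"
        using y_nonneg[OF True] by (rule mult_right_mono)
      then show ?thesis
        by (simp add: algebra_simps)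
    qed
    finally show ?thesis
      using True by simp
  next
    case False
    then show ?thesis
      using reconf_cover[of p] p charge_nonneg[OF p] by (simp add: mult_le_cancel_right1)
  qed
  then have "(\<Sum>p\<in>Pk P. charge p / 2) \<le> (\<Sum>p\<in>Pk P. (\<Sum>e\<in>Ep N P p. \<Sum>\<tau>\<in>{rl P p..H}. x p e \<tau>) * (charge p / 2)
      + (if p \<in> PiL N P then wt P p * real (ellp N P p) * y p else 0))"
    by (rule sum_mono)
  also have "\<dots> = (\<Sum>p\<in>Pk P. \<Sum>e\<in>Ep N P p. \<Sum>\<tau>\<in>{rl P p..H}. x p e \<tau> * (charge p / 2))
      + (\<Sum>p\<in>Pk P. if p \<in> PiL N P then wt P p * real (ellp N P p) * y p else 0)"
    by (simp only: sum.distrib sum_distrib_right)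
  also have "(\<Sum>p\<in>Pk P. if p \<in> PiL N P then wt P p * real (ellp N P p) * y p else 0)
      = (\<Sum>p\<in>PiL N P. wt P p * real (ellp N P p) * y p)"
    using PiL_sub by (simp add: sum.inter_restrict[OF finite_packets, symmetric] Int_absorb1)
  finally show ?thesis
    by (simp add: sum_divide_distrib)
qed

lemma fractional_charge_le:
  "(\<Sum>p\<in>Pk P. \<Sum>e\<in>Ep N P p. \<Sum>\<tau>\<in>{rl P p..H}. x p e \<tau> * (charge p / 2))
   \<le> (\<Sum>p\<in>Pk P. \<Sum>e\<in>Ep N P p. \<Sum>\<tau>\<in>{rl P p..H}. wt P p * x p e \<tau> * (real \<tau> + real (Delta N e) - real (rl P p)))
     + (\<Sum>p\<in>Pk P. \<Sum>e\<in>Ep N P p. \<Sum>\<tau>\<in>{rl P p..H}. real (dR N e) * x p e \<tau> * trs_backlog \<tau> (fst e)) / 2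
     + (\<Sum>p\<in>Pk P. \<Sum>e\<in>Ep N P p. \<Sum>\<tau>\<in>{rl P p..H}. real (dR N e) * x p e \<tau> * rcv_backlog \<tau> (snd e)) / 2"
proof -
  have "x p e \<tau> * (charge p / 2)
      \<le> wt P p * x p e \<tau> * (real \<tau> + real (Delta N e) - real (rl P p))
        + real (dR N e) * x p e \<tau> * trs_backlog \<tau> (fst e) / 2
        + real (dR N e) * x p e \<tau> * rcv_backlog \<tau> (snd e) / 2"
    if "p \<in> Pk P" "e \<in> Ep N P p" "\<tau> \<in> {rl P p..H}" for p e \<tau>
  proof -
    have "x p e \<tau> * (charge p / 2) \<le> x p e \<tau> * (wt P p * (real \<tau> + real (Delta N e) - real (rl P p))
        + real (dR N e) * (trs_backlog \<tau> (fst e) + rcv_backlog \<tau> (snd e)) / 2)"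
      using charge_le_backlog[of p e \<tau>] x_nonneg[of p e \<tau>] that by (intro mult_left_mono) auto
    then show ?thesis
      by (simp add: algebra_simps add_divide_distrib)
  qed
  then have "(\<Sum>p\<in>Pk P. \<Sum>e\<in>Ep N P p. \<Sum>\<tau>\<in>{rl P p..H}. x p e \<tau> * (charge p / 2))
      \<le> (\<Sum>p\<in>Pk P. \<Sum>e\<in>Ep N P p. \<Sum>\<tau>\<in>{rl P p..H}.
           wt P p * x p e \<tau> * (real \<tau> + real (Delta N e) - real (rl P p))
           + real (dR N e) * x p e \<tau> * trs_backlog \<tau> (fst e) / 2
           + real (dR N e) * x p e \<tau> * rcv_backlog \<tau> (snd e) / 2)"
    by (intro sum_mono) auto
  then show ?thesis
    by (simp only: sum.distrib sum_divide_distrib)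
qed

lemma trs_backlog_nonneg: "trs_backlog \<tau> t \<ge> 0"
  unfolding trs_backlog_def by (intro sum_nonneg w_nonneg) (auto simp: pending_def)

lemma rcv_backlog_nonneg: "rcv_backlog \<tau> r \<ge> 0"
  unfolding rcv_backlog_def by (intro sum_nonneg w_nonneg) (auto simp: pending_def)

lemma trs_load_le:
  "(\<Sum>p\<in>Pk P. \<Sum>e\<in>Ep N P p. \<Sum>\<tau>\<in>{rl P p..H}. real (dR N e) * x p e \<tau> * trs_backlog \<tau> (fst e))
   \<le> (\<Sum>\<tau>\<le>H. \<Sum>t\<in>Trs N. trs_backlog \<tau> t) / (2 + \<epsilon>)"
proof -
  let ?load = "\<lambda>\<tau> t. \<Sum>r\<in>Rcv N. \<Sum>p\<in>{p \<in> Pk P. rl P p \<le> \<tau> \<and> (t, r) \<in> Ep N P p}.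
      real (dR N (t, r)) * x p (t, r) \<tau>"
  have "(\<Sum>p\<in>Pk P. \<Sum>e\<in>Ep N P p. \<Sum>\<tau>\<in>{rl P p..H}. real (dR N e) * x p e \<tau> * trs_backlog \<tau> (fst e))
      = (\<Sum>\<tau>\<le>H. \<Sum>t\<in>Trs N. ?load \<tau> t * trs_backlog \<tau> t)"
    using Ep_subset by (simp add: sum_regroup_by_time[OF finite_packets finite_Trs finite_Rcv]
        sum_distrib_right)
  also have "\<dots> \<le> (\<Sum>\<tau>\<le>H. \<Sum>t\<in>Trs N. 1 / (2 + \<epsilon>) * trs_backlog \<tau> t)"
    using feasible trs_backlog_nonneg
    by (intro sum_mono mult_right_mono) (auto simp: lp_feasible_def)
  finally show ?thesis
    by (simp add: sum_divide_distrib)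
qed

lemma rcv_load_le:
  "(\<Sum>p\<in>Pk P. \<Sum>e\<in>Ep N P p. \<Sum>\<tau>\<in>{rl P p..H}. real (dR N e) * x p e \<tau> * rcv_backlog \<tau> (snd e))
   \<le> (\<Sum>\<tau>\<le>H. \<Sum>r\<in>Rcv N. rcv_backlog \<tau> r) / (2 + \<epsilon>)"
proof -
  let ?load = "\<lambda>\<tau> r. \<Sum>t\<in>Trs N. \<Sum>p\<in>{p \<in> Pk P. rl P p \<le> \<tau> \<and> (t, r) \<in> Ep N P p}.
      real (dR N (t, r)) * x p (t, r) \<tau>"
  have "(\<Sum>p\<in>Pk P. \<Sum>e\<in>Ep N P p. \<Sum>\<tau>\<in>{rl P p..H}. real (dR N e) * x p e \<tau> * rcv_backlog \<tau> (snd e))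
      = (\<Sum>\<tau>\<le>H. \<Sum>t\<in>Trs N. \<Sum>r\<in>Rcv N. \<Sum>p\<in>{p \<in> Pk P. rl P p \<le> \<tau> \<and> (t, r) \<in> Ep N P p}.
           real (dR N (t, r)) * x p (t, r) \<tau> * rcv_backlog \<tau> r)"
    using Ep_subset by (simp add: sum_regroup_by_time[OF finite_packets finite_Trs finite_Rcv])
  also have "\<dots> = (\<Sum>\<tau>\<le>H. \<Sum>r\<in>Rcv N. ?load \<tau> r * rcv_backlog \<tau> r)"
    by (subst sum.swap) (simp add: sum_distrib_right)
  also have "\<dots> \<le> (\<Sum>\<tau>\<le>H. \<Sum>r\<in>Rcv N. 1 / (2 + \<epsilon>) * rcv_backlog \<tau> r)"
    using feasible rcv_backlog_nonneg
    by (intro sum_mono mult_right_mono) (auto simp: lp_feasible_def)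
  finally show ?thesis
    by (simp add: sum_divide_distrib)
qed

lemma alg_cost_le_lp_obj: "alg_cost N P asg tx \<le> 2 * (2 / \<epsilon> + 1) * lp_obj N P H x y"
proof -
  define A where "A = alg_cost N P asg tx"
  have "(\<Sum>\<tau>\<le>H. \<Sum>t\<in>Trs N. trs_backlog \<tau> t) \<le> A" "(\<Sum>\<tau>\<le>H. \<Sum>r\<in>Rcv N. rcv_backlog \<tau> r) \<le> A"
    using trs_backlog_total_le rcv_backlog_total_le chunk_costs_le_alg_cost unfolding A_def
    by (blast intro: order_trans)+
  then have "(\<Sum>\<tau>\<le>H. \<Sum>t\<in>Trs N. trs_backlog \<tau> t) / (2 + \<epsilon>) \<le> A / (2 + \<epsilon>)"
      "(\<Sum>\<tau>\<le>H. \<Sum>r\<in>Rcv N. rcv_backlog \<tau> r) / (2 + \<epsilon>) \<le> A / (2 + \<epsilon>)"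
    using eps_pos by (simp_all add: divide_right_mono)
  then have "A / 2 \<le> lp_obj N P H x y + A / (2 + \<epsilon>)"
    using alg_cost_le_charges charges_le_fractional fractional_charge_le trs_load_le rcv_load_le
    unfolding A_def lp_obj_def by linarith
  then have "A * (\<epsilon> / (2 * (2 + \<epsilon>))) \<le> lp_obj N P H x y"
    using eps_pos by (simp add: field_simps)
  then show ?thesis
    using eps_pos unfolding A_def[symmetric] by (simp add: field_simps)
qed

end

theorem mainTheorem1:
  fixes N :: "('s,'t,'r,'d) network" and P :: "('p,'s,'d) packets"
    and prec :: "('p \<times> 'p) set"
    and asg :: "'p \<Rightarrow> ('t \<times> 'r) option" and tx :: "'p \<times> nat \<Rightarrow> nat"
    and \<epsilon> :: real and H :: nat
  assumes "wf_instance N P"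
    and "strict_linear_order_on (Pk P) prec"
    and "\<forall>p\<in>Pk P. \<forall>q\<in>Pk P. rl P p < rl P q \<longrightarrow> (p, q) \<in> prec"
    and "alg_run N P prec asg tx"
    and "\<epsilon> > 0"
    and "\<forall>p\<in>Pk P. rl P p \<le> H"
  shows "ereal (alg_cost N P asg tx) \<le> ereal (2 * (2 / \<epsilon> + 1)) * lp_val N P \<epsilon> H"
proof -
  define K where "K = 2 * (2 / \<epsilon> + 1)"
  have K: "K > 0"
    using assms(5) by (simp add: K_def add_pos_pos)
  have "ereal (alg_cost N P asg tx / K) \<le> lp_val N P \<epsilon> H"
    unfolding lp_val_def
  proof (rule INF_greatest, clarify)
    fix x y assume "lp_feasible N P \<epsilon> H x y"
    then interpret lp_fitting N P prec asg tx \<epsilon> H x y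
      using assms(1-5) by unfold_locales
    show "ereal (alg_cost N P asg tx / K) \<le> ereal (lp_obj N P H (fst (x, y)) (snd (x, y)))"
      using alg_cost_le_lp_obj K by (simp add: K_def pos_divide_le_eq mult.commute)
  qed
  then have "ereal K * ereal (alg_cost N P asg tx / K) \<le> ereal K * lp_val N P \<epsilon> H"
    using K by (intro ereal_mult_left_mono) simp_all
  then show ?thesis
    using K by (simp add: K_def)
qed

end
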